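(* Let $C\ge 2$ and let $\mathbf{o}_m,\mathbf{o}_n\in\mathbb{R}^C$ be logit vectors with $\mathbf{s}_m=\mathrm{softmax}(\mathbf{o}_m)$, $\mathbf{s}_n=\mathrm{softmax}(\mathbf{o}_n)$. Define the KL loss $$\mathcal{L}_{KL}(\mathbf{o}_m,\mathbf{o}_n)=\sum_{j=1}^C \mathbf{s}_m^j\log\frac{\mathbf{s}_m^j}{\mathbf{s}_n^j}.$$ Fix a point $(\bar{\mathbf{o}}_m,\bar{\mathbf{o}}_n)\in\mathbb{R}^C\times\mathbb{R}^C$, and let $\bar{\mathbf{s}}_m=\mathrm{softmax}(\bar{\mathbf{o}}_m)$, $\bar{\mathbf{w}}^{j,k}=\bar{\mathbf{s}}_m^j\bar{\mathbf{s}}_m^k$, $\overline{\Delta\mathbf{n}}_{j,k}=\bar{\mathbf{o}}_n^j-\bar{\mathbf{o}}_n^k$. For $\alpha,\beta>0$ define the Decoupled KL (DKL) loss (in which the barred quantities are held constant, i.e. are "stop-gradient" quantities) $$\mathcal{L}_{DKL}(\mathbf{o}_m,\mathbf{o}_n)=\frac{\alpha}{4}\sum_{j=1}^C\sum_{k=1}^C \bar{\mathbf{w}}^{j,k}\big((\mathbf{o}_m^j-\mathbf{o}_m^k)-\overline{\Delta\mathbf{n}}_{j,k}\big)^2\;-\;\beta\sum_{j=1}^C \bar{\mathbf{s}}_m^j\log \mathrm{softmax}(\mathbf{o}_n)^j .$$ Then, when $\alpha=\beta=1$, at the point $(\mathbf{o}_m,\mathbf{o}_n)=(\bar{\mathbf{o}}_m,\bar{\mathbf{o}}_n)$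 we have $$\nabla_{\mathbf{o}_m}\mathcal{L}_{DKL}=\nabla_{\mathbf{o}_m}\mathcal{L}_{KL},\qquad \nabla_{\mathbf{o}_n}\mathcal{L}_{DKL}=\nabla_{\mathbf{o}_n}\mathcal{L}_{KL}.$$ Since $(\bar{\mathbf{o}}_m,\bar{\mathbf{o}}_n)$ is arbitrary, the KL loss and the DKL loss (with $\alpha=\beta=1$) produce identical gradients at every input.
   Context: $\mathrm{softmax}(\mathbf{o})^j=e^{\mathbf{o}^j}/\sum_{k=1}^C e^{\mathbf{o}^k}$. Superscripts $j,k$ denote coordinates (class indices). The "stop-gradient" convention: in $\mathcal{L}_{DKL}$, the weights $\bar{\mathbf{w}}$, the differences $\overline{\Delta\mathbf{n}}$ and the soft labels $\bar{\mathbf{s}}_m$ are evaluated at the point where the gradient is taken and are treated as constants when differentiating. *)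

theory Defs
  imports "HOL-Analysis.Analysis"
begin

text \<open>Logit vectors in R^C are modelled as real^'c with a finite index type 'c, C = CARD('c).\<close>

definition softmax :: "real ^ 'c::finite \<Rightarrow> real ^ 'c" where
  "softmax o' = (\<chi> j. exp (o' $ j) / (\<Sum>k\<in>UNIV. exp (o' $ k)))"

definition L_KL :: "real ^ 'c::finite \<Rightarrow> real ^ 'c \<Rightarrow> real" where
  "L_KL om on = (\<Sum>j\<in>UNIV. softmax om $ j * ln (softmax om $ j / softmax on $ j))"

text \<open>Decoupled KL loss; the barred point (obm, obn) supplies the stop-gradient
  quantities w, Delta n and s_m, which are constants in the variables (om, on).\<close>
definition L_DKL :: "real \<Rightarrow> real \<Rightarrow> real ^ 'c::finite \<Rightarrow> real ^ 'c \<Rightarrow> real ^ 'c \<Rightarrow> real ^ 'c \<Rightarrow> real" where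
  "L_DKL \<alpha> \<beta> obm obn om on =
     \<alpha> / 4 * (\<Sum>j\<in>UNIV. \<Sum>k\<in>UNIV.
        (softmax obm $ j * softmax obm $ k) *
        ((om $ j - om $ k) - (obn $ j - obn $ k))\<^sup>2)
     - \<beta> * (\<Sum>j\<in>UNIV. softmax obm $ j * ln (softmax on $ j))"

end

theory Submission
  imports Defs
begin

text \<open>Write s = softmax obm, t = softmax obn and d = obm - obn. Both losses have
  gradient (s_j (d_j - \<Sum>_k s_k d_k))_j in the first argument and t - s in the second.
  For KL this rests on ln (softmax x)_j = x_j - ln (\<Sum>_k exp x_k): the normalising
  constants only contribute multiples of \<Sum>_j s_j = 1. For DKL, the quadratic term is
  (a multiple of) the s-weighted variance of x - obn, whose gradient is that centred
  vector, and the cross-entropy term gives t - s.\<close>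

lemma has_derivative_vec_nth [derivative_intros]:
  "((\<lambda>x. x $ i) has_derivative (\<lambda>x. x $ i)) F"
  by (rule bounded_linear_imp_has_derivative) (rule bounded_linear_vec_nth)

definition exp_sum :: "real ^ 'c::finite \<Rightarrow> real" where
  "exp_sum x = (\<Sum>k\<in>UNIV. exp (x $ k))"

lemma exp_sum_pos: "exp_sum x > 0"
  unfolding exp_sum_def by (intro sum_pos) auto

lemma has_derivative_exp_sum:
  "(exp_sum has_derivative (\<lambda>h. \<Sum>k\<in>UNIV. exp (x $ k) * h $ k)) (at x)"
  unfolding exp_sum_def by (auto intro!: derivative_eq_intros simp: mult.commute)

lemma softmax_nth: "softmax x $ j = exp (x $ j) / exp_sum x"
  by (simp add: softmax_def exp_sum_def)

lemma softmax_pos: "softmax x $ j > 0"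
  using exp_sum_pos[of x] by (simp add: softmax_nth)

lemma softmax_neq_zero [simp]: "softmax x $ j \<noteq> 0"
  using softmax_pos[of x j] by simp

lemma sum_softmax: "(\<Sum>j\<in>UNIV. softmax x $ j) = 1"
  using exp_sum_pos[of x]
  by (simp add: softmax_nth sum_divide_distrib[symmetric] exp_sum_def)

lemma ln_softmax: "ln (softmax x $ j) = x $ j - ln (exp_sum x)"
  using exp_sum_pos[of x] by (simp add: softmax_nth ln_div)

lemma has_derivative_ln_softmax:
  "((\<lambda>x. ln (softmax x $ j)) has_derivative
     (\<lambda>h. h $ j - (\<Sum>i\<in>UNIV. softmax x $ i * h $ i))) (at x)"
proof -
  have "((\<lambda>x. x $ j - ln (exp_sum x)) has_derivative
          (\<lambda>h. h $ j - (\<Sum>k\<in>UNIV. exp (x $ k) * h $ k) / exp_sum x)) (at x)"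
    using exp_sum_pos[of x]
    by (auto intro!: derivative_eq_intros has_derivative_exp_sum simp: field_simps)
  moreover have "(\<lambda>h. h $ j - (\<Sum>k\<in>UNIV. exp (x $ k) * h $ k) / exp_sum x)
               = (\<lambda>h. h $ j - (\<Sum>i\<in>UNIV. softmax x $ i * h $ i))"
    by (simp add: softmax_nth sum_divide_distrib)
  ultimately show ?thesis by (simp add: ln_softmax)
qed

lemma has_derivative_softmax:
  "((\<lambda>x. softmax x $ j) has_derivative
     (\<lambda>h. softmax x $ j * (h $ j - (\<Sum>i\<in>UNIV. softmax x $ i * h $ i)))) (at x)"
proof -
  have "(\<lambda>x. softmax x $ j) = (\<lambda>x. exp (ln (softmax x $ j)))"
    by (simp add: softmax_pos)
  then show ?thesis
    using has_derivative_exp[OF has_derivative_ln_softmax[of j x]] softmax_pos[of x j]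
    by (simp add: algebra_simps)
qed

definition centred_weighted :: "real ^ 'c::finite \<Rightarrow> real ^ 'c \<Rightarrow> real ^ 'c" where
  "centred_weighted s d = (\<chi> j. s $ j * (d $ j - (\<Sum>k\<in>UNIV. s $ k * d $ k)))"

lemma inner_centred_weighted:
  "centred_weighted s d \<bullet> h
     = (\<Sum>j\<in>UNIV. s $ j * d $ j * h $ j) - (\<Sum>j\<in>UNIV. s $ j * d $ j) * (\<Sum>k\<in>UNIV. s $ k * h $ k)"
  by (simp add: centred_weighted_def inner_vec_def algebra_simps sum_subtractf sum_distrib_left)

lemma sum_pairwise_weighted_diff_product:
  fixes s a h :: "'c::finite \<Rightarrow> real"
  assumes "(\<Sum>j\<in>UNIV. s j) = 1"
  shows "(\<Sum>j\<in>UNIV. \<Sum>k\<in>UNIV. s j * s k * ((a j - a k) * (h j - h k)))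
       = 2 * (\<Sum>j\<in>UNIV. s j * a j * h j) - 2 * (\<Sum>j\<in>UNIV. s j * a j) * (\<Sum>k\<in>UNIV. s k * h k)"
proof -
  have split: "s j * s k * ((a j - a k) * (h j - h k)) =
      s k * (s j * a j * h j) + s j * (s k * a k * h k)
      - (s j * a j) * (s k * h k) - (s k * a k) * (s j * h j)" for j k
    by (simp add: algebra_simps)
  show ?thesis
    unfolding split using assms
    by (simp add: sum.distrib sum_subtractf sum_distrib_left[symmetric]
        sum_distrib_right[symmetric] mult.commute)
qed

lemma has_derivative_cross_entropy:
  assumes "(\<Sum>j\<in>UNIV. p $ j) = 1"
  shows "((\<lambda>y. \<Sum>j\<in>UNIV. p $ j * ln (softmax y $ j)) has_derivative
           (\<lambda>h. (p - softmax y) \<bullet> h)) (at y)"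
proof -
  have "((\<lambda>y. \<Sum>j\<in>UNIV. p $ j * ln (softmax y $ j)) has_derivative
          (\<lambda>h. \<Sum>j\<in>UNIV. p $ j * (h $ j - (\<Sum>i\<in>UNIV. softmax y $ i * h $ i)))) (at y)"
    by (auto intro!: derivative_eq_intros has_derivative_softmax sum.cong
        simp: softmax_pos field_simps)
  moreover have "(\<Sum>j\<in>UNIV. p $ j * (h $ j - (\<Sum>i\<in>UNIV. softmax y $ i * h $ i)))
               = (p - softmax y) \<bullet> h" for h
    using assms by (simp add: inner_vec_def algebra_simps sum_subtractf sum_distrib_right[symmetric])
  ultimately show ?thesis by simp
qed

lemma has_derivative_L_KL_left:
  "((\<lambda>x. L_KL x y) has_derivative (\<lambda>h. centred_weighted (softmax x) (x - y) \<bullet> h)) (at x)"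
proof -
  let ?s = "softmax x"
  let ?H = "\<lambda>h. \<Sum>i\<in>UNIV. ?s $ i * h $ i"
  have KL: "(\<lambda>x. L_KL x y) = (\<lambda>x. \<Sum>j\<in>UNIV. softmax x $ j * (ln (softmax x $ j) - ln (softmax y $ j)))"
    by (simp add: L_KL_def ln_div softmax_pos)
  have "((\<lambda>x. L_KL x y) has_derivative
          (\<lambda>h. \<Sum>j\<in>UNIV. ?s $ j * (h $ j - ?H h) * (ln (?s $ j) - ln (softmax y $ j))
                          + ?s $ j * (h $ j - ?H h))) (at x)"
    unfolding KL
    by (auto intro!: derivative_eq_intros has_derivative_softmax has_derivative_ln_softmax
        sum.cong simp: softmax_pos field_simps)
  moreover have "(\<Sum>j\<in>UNIV. ?s $ j * (h $ j - ?H h) * (ln (?s $ j) - ln (softmax y $ j))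
                            + ?s $ j * (h $ j - ?H h))
               = centred_weighted ?s (x - y) \<bullet> h" for h
  proof -
    define c where "c = ln (exp_sum y) - ln (exp_sum x)"
    define H where "H = ?H h"
    have ln_ratio: "ln (?s $ j) - ln (softmax y $ j) = (x - y) $ j + c" for j
      by (simp add: ln_softmax c_def)
    have "(\<Sum>j\<in>UNIV. ?s $ j * (h $ j - H) * (ln (?s $ j) - ln (softmax y $ j))
                         + ?s $ j * (h $ j - H))
        = (\<Sum>j\<in>UNIV. ?s $ j * (x - y) $ j * h $ j) - (\<Sum>j\<in>UNIV. ?s $ j * (x - y) $ j) * H
          + (c + 1) * ((\<Sum>j\<in>UNIV. ?s $ j * h $ j) - H * (\<Sum>j\<in>UNIV. ?s $ j))"
      unfolding ln_ratio
      by (simp add: algebra_simps sum.distrib sum_subtractf sum_distrib_left sum_distrib_right)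
    also have "\<dots> = centred_weighted ?s (x - y) \<bullet> h"
      by (simp add: sum_softmax inner_centred_weighted H_def)
    finally show ?thesis unfolding H_def .
  qed
  ultimately show ?thesis by simp
qed

lemma has_derivative_L_KL_right:
  "((\<lambda>y. L_KL x y) has_derivative (\<lambda>h. (softmax y - softmax x) \<bullet> h)) (at y)"
proof -
  have "(\<lambda>y. L_KL x y) = (\<lambda>y. (\<Sum>j\<in>UNIV. softmax x $ j * ln (softmax x $ j))
                              - (\<Sum>j\<in>UNIV. softmax x $ j * ln (softmax y $ j)))"
    by (simp add: L_KL_def ln_div softmax_pos algebra_simps sum_subtractf)
  then show ?thesis
    using has_derivative_diff[OF has_derivative_const has_derivative_cross_entropy[OF sum_softmax]]
    by (simp add: inner_diff_left)
qed

lemma has_derivative_L_DKL_left: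
  "((\<lambda>x. L_DKL \<alpha> \<beta> obm obn x y) has_derivative
     (\<lambda>h. (\<alpha> *\<^sub>R centred_weighted (softmax obm) (x - obn)) \<bullet> h)) (at x)"
proof -
  let ?s = "softmax obm"
  have "((\<lambda>x. L_DKL \<alpha> \<beta> obm obn x y) has_derivative
          (\<lambda>h. \<alpha> / 4 * (\<Sum>j\<in>UNIV. \<Sum>k\<in>UNIV. (?s $ j * ?s $ k) *
             (2 * ((x $ j - x $ k) - (obn $ j - obn $ k)) * (h $ j - h $ k))))) (at x)"
    unfolding L_DKL_def
    by (auto intro!: derivative_eq_intros simp: power2_eq_square algebra_simps)
  moreover have gradient: "\<alpha> / 4 * (\<Sum>j\<in>UNIV. \<Sum>k\<in>UNIV. (?s $ j * ?s $ k) *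
             (2 * ((x $ j - x $ k) - (obn $ j - obn $ k)) * (h $ j - h $ k)))
      = (\<alpha> *\<^sub>R centred_weighted ?s (x - obn)) \<bullet> h" for h
  proof -
    have "(\<Sum>j\<in>UNIV. \<Sum>k\<in>UNIV. (?s $ j * ?s $ k) *
             (2 * ((x $ j - x $ k) - (obn $ j - obn $ k)) * (h $ j - h $ k)))
        = 2 * (\<Sum>j\<in>UNIV. \<Sum>k\<in>UNIV. ?s $ j * ?s $ k *
             (((x - obn) $ j - (x - obn) $ k) * (h $ j - h $ k)))"
      by (simp add: sum_distrib_left algebra_simps)
    also have "\<dots> = 4 * (centred_weighted ?s (x - obn) \<bullet> h)"
      using sum_pairwise_weighted_diff_product[of "\<lambda>j. ?s $ j", OF sum_softmax,
          of "\<lambda>j. (x - obn) $ j" "\<lambda>j. h $ j"]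
      by (simp add: inner_centred_weighted)
    finally show ?thesis by simp
  qed
  ultimately show ?thesis by (simp only: gradient)
qed

lemma has_derivative_L_DKL_right:
  "((\<lambda>y. L_DKL \<alpha> \<beta> obm obn x y) has_derivative
     (\<lambda>h. (\<beta> *\<^sub>R (softmax y - softmax obm)) \<bullet> h)) (at y)"
  unfolding L_DKL_def
  using has_derivative_diff[OF has_derivative_const
      has_derivative_mult_right[OF has_derivative_cross_entropy[OF sum_softmax[of obm]]]]
  by (simp add: algebra_simps inner_diff_left)

theorem theorem1:
  fixes obm obn :: "real ^ 'c::finite"
  assumes "CARD('c) \<ge> 2"
  shows "(\<exists>g. ((\<lambda>x. L_KL x obn) has_derivative (\<lambda>h. g \<bullet> h)) (at obm)
            \<and> ((\<lambda>x. L_DKL 1 1 obm obn x obn) has_derivative (\<lambda>h. g \<bullet> h)) (at obm))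
       \<and> (\<exists>g. ((\<lambda>y. L_KL obm y) has_derivative (\<lambda>h. g \<bullet> h)) (at obn)
            \<and> ((\<lambda>y. L_DKL 1 1 obm obn obm y) has_derivative (\<lambda>h. g \<bullet> h)) (at obn))"
  using has_derivative_L_KL_left[where x = obm and y = obn]
    has_derivative_L_DKL_left[where \<alpha> = 1 and \<beta> = 1 and x = obm and y = obn]
    has_derivative_L_KL_right[where x = obm and y = obn]
    has_derivative_L_DKL_right[where \<alpha> = 1 and \<beta> = 1 and x = obm and y = obn]
  by auto

end
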